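(* Let $E$ be a real Banach space which is uniformly convex with modulus $\delta_E$, and let $d>0$. Let $A\subset E$ be a closed set which is weakly convex with modulus of nonconvexity $\gamma_A(\varepsilon)$, $\varepsilon\in[0,2d)$, with $d\,\delta_E(\varepsilon/d)>\gamma_A(\varepsilon)$ for all $\varepsilon\in(0,2d)$, and suppose condition (i) holds for $\delta(t)=d\,\delta_E(t/d)$ and $\gamma=\gamma_A$. Let $d_1\in(0,d)$. Then for every $x\in E$, the set $A\cap B_{d_1}(x)$, if nonempty, is weakly convex with modulus of nonconvexity $\gamma_{A\cap B_{d_1}(x)}(\varepsilon)\le\gamma_A(\varepsilon)$ for $\varepsilon\in[0,\operatorname{diam}(A\cap B_{d_1}(x)))$, and it is path connected.
   Context: $B_r(a)$ is the closed ball. $\delta_E(\varepsilon)=\sup\{\delta\ge0: B_\delta(\frac{x_1+x_2}{2})\subset B_1(0)\ \forall x_1,x_2\in B_1(0),\ \|x_1-x_2\|=\varepsilon\}$ on $[0,2)$; $E$ uniformly convex means $\delta_E>0$ on $(0,2)$. For a closed set $S$ and $\varepsilon>0$, $\gamma^0_S(\varepsilon)=\inf\{\gamma>0: B_\gamma(\frac{x_1+x_2}{2})\cap S\ne\emptyset\ \forall x_1,x_2\in S,\ \|x_1-x_2\|\le\varepsilon\}$; modulus of nonconvexity $\gamma_S(0)=0$, $\gamma_S(\varepsilon)=\lim_{\tau\downarrow\varepsilon}\gamma^0_S(\tau)$. $S$ is weakly convex with modulus $\gamma_S$ on $[0,d')$ if $\gamma_S(\varepsilon)<\varepsilon/2$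 for $\varepsilon\in(0,d')$. Condition (i) for moduli $\delta,\gamma$: there is $s_0>0$ such that for every $s\in(0,s_0]$: (1) there is $t_s>s$ with $\delta(t_s-s)=\gamma(t_s)$; (2) $t\mapsto\delta(t-s)-\gamma(t)$ is positive and increasing for $t>t_s$; (3) there is $t(s)>t_s$ with $\delta(t(s)-s)-\gamma(t(s))=s/2$. *)

theory Defs
  imports "HOL-Analysis.Analysis"
begin

definition modconv :: "('a::real_normed_vector itself) \<Rightarrow> real \<Rightarrow> real" where
  "modconv _ \<epsilon> = Sup {\<delta>. \<delta> \<ge> 0 \<and>
     (\<forall>x1 x2::'a. x1 \<in> cball 0 1 \<longrightarrow> x2 \<in> cball 0 1 \<longrightarrow> norm (x1 - x2) = \<epsilon> \<longrightarrow>
        cball (midpoint x1 x2) \<delta> \<subseteq> cball 0 1)}"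

definition uniformly_convex_space :: "('a::real_normed_vector itself) \<Rightarrow> bool" where
  "uniformly_convex_space T \<longleftrightarrow> (\<forall>\<epsilon>. 0 < \<epsilon> \<and> \<epsilon> < 2 \<longrightarrow> modconv T \<epsilon> > 0)"

definition gamma0 :: "'a::real_normed_vector set \<Rightarrow> real \<Rightarrow> real" where
  "gamma0 S \<epsilon> = Inf {\<gamma>. \<gamma> > 0 \<and>
     (\<forall>x1\<in>S. \<forall>x2\<in>S. norm (x1 - x2) \<le> \<epsilon> \<longrightarrow> cball (midpoint x1 x2) \<gamma> \<inter> S \<noteq> {})}"

definition modnonconv :: "'a::real_normed_vector set \<Rightarrow> real \<Rightarrow> real" where
  "modnonconv S \<epsilon> = (if \<epsilon> = 0 then 0 else Lim (at_right \<epsilon>) (gamma0 S))"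

definition weakly_convex_on :: "'a::real_normed_vector set \<Rightarrow> real \<Rightarrow> bool" where
  "weakly_convex_on S d' \<longleftrightarrow> (\<forall>\<epsilon>. 0 < \<epsilon> \<and> \<epsilon> < d' \<longrightarrow> modnonconv S \<epsilon> < \<epsilon> / 2)"

definition condition_i :: "(real \<Rightarrow> real) \<Rightarrow> (real \<Rightarrow> real) \<Rightarrow> real \<Rightarrow> bool" where
  "condition_i \<delta> \<gamma> D \<longleftrightarrow> (\<exists>s0>0. \<forall>s. 0 < s \<and> s \<le> s0 \<longrightarrow>
     (\<exists>ts. s < ts \<and> ts < D \<and> \<delta> (ts - s) = \<gamma> ts \<and>
        (\<forall>t. ts < t \<and> t < D \<longrightarrow> \<delta> (t - s) - \<gamma> t > 0) \<and>
        strict_mono_on {ts<..<D} (\<lambda>t. \<delta> (t - s) - \<gamma> t) \<and>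
        (\<exists>t'. ts < t' \<and> t' < D \<and> \<delta> (t' - s) - \<gamma> t' = s / 2)))"

end

theory Submission
  imports Defs
begin

text \<open>Let \<open>x1, x2\<close> lie in a ball \<open>cball c r\<close> with \<open>r \<le> d\<close>. Moving the centre away from the
  midpoint until the radius is \<open>d\<close> and applying the definition of \<open>\<delta>\<^sub>E\<close> in the enlarged ball
  shows that every point within \<open>d \<delta>\<^sub>E(\<parallel>x1 - x2\<parallel> / d)\<close> of the midpoint still lies in
  \<open>cball c r\<close>. Since this quantity dominates \<open>\<gamma>\<^sub>A\<close>, the approximate midpoints witnessing \<open>\<gamma>\<^sub>A\<close>
  can be taken inside \<open>cball x d1\<close>, so the modulus of \<open>A \<inter> cball x d1\<close> is at most \<open>\<gamma>\<^sub>A\<close>.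

  For path connectedness, fill dyadic grids between two points by choosing such approximate
  midpoints repeatedly. The grid mesh is contracted by \<open>\<eta> \<mapsto> 3\<eta>/4 + \<gamma>\<^sub>A(\<eta>)/2\<close>, which weak
  convexity keeps uniformly below \<open>\<eta>\<close> near every \<open>\<eta> > 0\<close>, so the mesh tends to zero. All
  refinements of a grid cell stay in the ball spanned by its endpoints, hence the grid values at
  a time \<open>t\<close> converge uniformly to a continuous path in the closed set \<open>A \<inter> cball x d1\<close>.\<close>

section \<open>The modulus of nonconvexity\<close>

definition approx_midpoint_radii :: "'a::real_normed_vector set \<Rightarrow> real \<Rightarrow> real set" where
  "approx_midpoint_radii S t = {\<gamma>. \<gamma> > 0 \<and>
     (\<forall>x1\<in>S. \<forall>x2\<in>S. norm (x1 - x2) \<le> t \<longrightarrow> cball (midpoint x1 x2) \<gamma> \<inter> S \<noteq> {})}"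

lemma gamma0_eq_Inf: "gamma0 S t = Inf (approx_midpoint_radii S t)"
  by (simp add: gamma0_def approx_midpoint_radii_def)

lemma half_in_approx_midpoint_radii:
  assumes "t > 0"
  shows "t / 2 \<in> approx_midpoint_radii S t"
proof -
  have "cball (midpoint x1 x2) (t / 2) \<inter> S \<noteq> {}"
    if "x1 \<in> S" "norm (x1 - x2) \<le> t" for x1 x2
  proof -
    have "x1 \<in> cball (midpoint x1 x2) (t / 2)"
      using that(2) by (simp add: dist_midpoint) (simp add: dist_norm)
    then show ?thesis
      using that(1) by blast
  qed
  then show ?thesis
    using assms by (simp add: approx_midpoint_radii_def)
qed

lemma bdd_below_approx_midpoint_radii: "bdd_below (approx_midpoint_radii S t)"
  by (rule bdd_belowI[of _ 0]) (auto simp: approx_midpoint_radii_def)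

lemma gamma0_nonneg:
  assumes "t > 0"
  shows "0 \<le> gamma0 S t"
proof -
  have "approx_midpoint_radii S t \<noteq> {}"
    using half_in_approx_midpoint_radii[OF assms] by blast
  then show ?thesis
    unfolding gamma0_eq_Inf by (rule cInf_greatest) (simp add: approx_midpoint_radii_def)
qed

lemma gamma0_le_half: "t > 0 \<Longrightarrow> gamma0 S t \<le> t / 2"
  unfolding gamma0_eq_Inf
  by (rule cInf_lower[OF half_in_approx_midpoint_radii bdd_below_approx_midpoint_radii])

lemma gamma0_mono:
  assumes "0 < t" "t \<le> t'"
  shows "gamma0 S t \<le> gamma0 S t'"
  unfolding gamma0_eq_Inf
proof (rule cInf_superset_mono)
  show "approx_midpoint_radii S t' \<noteq> {}"
    using half_in_approx_midpoint_radii[of t'] assms by auto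
  show "approx_midpoint_radii S t' \<subseteq> approx_midpoint_radii S t"
    using assms by (auto simp: approx_midpoint_radii_def)
qed (rule bdd_below_approx_midpoint_radii)

lemma gamma0_less_imp_near_midpoint:
  assumes "x1 \<in> A" "x2 \<in> A" "norm (x1 - x2) \<le> t" "t > 0" "gamma0 A t < \<tau>"
  obtains p where "p \<in> A" "dist p (midpoint x1 x2) < \<tau>"
proof -
  have "approx_midpoint_radii A t \<noteq> {}"
    using half_in_approx_midpoint_radii[OF assms(4)] by blast
  then obtain \<gamma> where \<gamma>: "\<gamma> \<in> approx_midpoint_radii A t" "\<gamma> < \<tau>"
    using assms(5) cInf_less_iff[OF _ bdd_below_approx_midpoint_radii] unfolding gamma0_eq_Inf
    by blast
  then have "cball (midpoint x1 x2) \<gamma> \<inter> A \<noteq> {}"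
    using assms(1-3) by (simp add: approx_midpoint_radii_def)
  then obtain p where "p \<in> A" "dist (midpoint x1 x2) p \<le> \<gamma>"
    by auto
  then show ?thesis
    using \<gamma>(2) that by (simp add: dist_commute)
qed

lemma bdd_below_gamma0_image: "e > 0 \<Longrightarrow> bdd_below (gamma0 S ` {e<..})"
  by (rule bdd_belowI[of _ 0]) (auto intro: gamma0_nonneg)

lemma modnonconv_eq_INF:
  assumes "e > 0"
  shows "modnonconv S e = (INF t\<in>{e<..}. gamma0 S t)"
proof -
  have "(gamma0 S \<longlongrightarrow> (INF t\<in>{e<..} \<inter> UNIV. gamma0 S t)) (at e within {e<..} \<inter> UNIV)"
    using assms by (intro Lim_right_bound[where K=0]) (auto intro: gamma0_mono gamma0_nonneg)
  then show ?thesis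
    using assms by (simp add: modnonconv_def tendsto_Lim)
qed

lemma gamma0_le_modnonconv:
  assumes "e > 0"
  shows "gamma0 S e \<le> modnonconv S e"
  unfolding modnonconv_eq_INF[OF assms]
  using assms by (intro cINF_greatest) (auto intro: gamma0_mono)

lemma modnonconv_le_modnonconv:
  assumes "0 \<le> e" "\<And>t. t > e \<Longrightarrow> gamma0 S t \<le> gamma0 T t"
  shows "modnonconv S e \<le> modnonconv T e"
proof (cases "e = 0")
  case False
  then have "e > 0"
    using assms(1) by simp
  then show ?thesis
    using assms unfolding modnonconv_eq_INF[OF \<open>e > 0\<close>]
    by (intro cINF_mono) (auto intro: bdd_below_gamma0_image)
qed (simp add: modnonconv_def)

section \<open>Approximate midpoints stay in small balls\<close>

lemma cball_midpoint_subset_unit_cball: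
  fixes x1 x2 :: "'a::real_normed_vector"
  assumes "x1 \<in> cball 0 1" "x2 \<in> cball 0 1" "\<delta> < modconv TYPE('a) (norm (x1 - x2))"
  shows "cball (midpoint x1 x2) \<delta> \<subseteq> cball 0 1"
  \<comment> \<open>\<open>modconv\<close> is a supremum; it is bounded (by 1) only if the space has a unit vector.\<close>
proof (cases "\<exists>u::'a. u \<noteq> 0")
  case True
  then obtain u :: 'a where "u \<noteq> 0"
    by blast
  define v where "v = sgn u"
  have v: "norm v = 1"
    using \<open>u \<noteq> 0\<close> by (simp add: v_def norm_sgn)
  define D where "D = {\<delta>. \<delta> \<ge> 0 \<and>
     (\<forall>y1 y2::'a. y1 \<in> cball 0 1 \<longrightarrow> y2 \<in> cball 0 1 \<longrightarrow> norm (y1 - y2) = norm (x1 - x2) \<longrightarrow>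
        cball (midpoint y1 y2) \<delta> \<subseteq> cball 0 1)}"
  have "0 \<in> D"
    by (auto simp: D_def midpoint_def intro: order_trans[OF norm_triangle_ineq])
  have "bdd_above D"
  proof (rule bdd_aboveI[of _ 1])
    fix \<delta> assume "\<delta> \<in> D"
    then have "0 \<le> \<delta>" and sub: "cball (midpoint x1 x2) \<delta> \<subseteq> cball 0 1"
      using assms(1,2) by (auto simp: D_def)
    moreover have "midpoint x1 x2 + \<delta> *\<^sub>R v \<in> cball (midpoint x1 x2) \<delta>"
      "midpoint x1 x2 - \<delta> *\<^sub>R v \<in> cball (midpoint x1 x2) \<delta>"
      using v \<open>0 \<le> \<delta>\<close> by (simp_all add: dist_norm)
    ultimately have "midpoint x1 x2 + \<delta> *\<^sub>R v \<in> cball 0 1" "midpoint x1 x2 - \<delta> *\<^sub>R v \<in> cball 0 1"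
      by blast+
    then have "norm ((midpoint x1 x2 + \<delta> *\<^sub>R v) - (midpoint x1 x2 - \<delta> *\<^sub>R v)) \<le> 2"
      by (intro order_trans[OF norm_triangle_ineq4]) auto
    then show "\<delta> \<le> 1"
      using v \<open>0 \<le> \<delta>\<close> by (simp add: scaleR_2 flip: scaleR_add_left)
  qed
  moreover have "\<delta> < Sup D"
    using assms(3) by (simp add: modconv_def D_def)
  ultimately obtain \<delta>' where "\<delta>' \<in> D" "\<delta> < \<delta>'"
    using \<open>0 \<in> D\<close> less_cSup_iff[of D] by blast
  then have "cball (midpoint x1 x2) \<delta>' \<subseteq> cball 0 1"
    using assms(1,2) by (simp add: D_def)
  then show ?thesis
    using \<open>\<delta> < \<delta>'\<close> subset_cball[of \<delta> \<delta>'] by force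
next
  case False
  show ?thesis
  proof
    fix z :: 'a
    have "z = 0"
      using False by blast
    then show "z \<in> cball 0 1"
      by simp
  qed
qed

lemma cball_midpoint_subset_cball:
  fixes x1 x2 y :: "'a::real_normed_vector"
  assumes "d > 0" "x1 \<in> cball y d" "x2 \<in> cball y d"
    and "\<delta> < d * modconv TYPE('a) (norm (x1 - x2) / d)"
  shows "cball (midpoint x1 x2) \<delta> \<subseteq> cball y d"
proof
  fix p assume p: "p \<in> cball (midpoint x1 x2) \<delta>"
  define s where "s z = (1 / d) *\<^sub>R (z - y)" for z
  have s_dist: "dist (s z) (s z') = dist z z' / d" for z z'
  proof -
    have "s z - s z' = (1 / d) *\<^sub>R (z - z')"
      by (simp add: s_def algebra_simps)
    then show ?thesis
      using assms(1) by (simp add: dist_norm)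
  qed
  have "s y = 0" "midpoint (s x1) (s x2) = s (midpoint x1 x2)"
    unfolding midpoint_eq_iff by (simp_all add: s_def algebra_simps flip: scaleR_right_distrib)
  moreover have "s x1 \<in> cball (s y) 1" "s x2 \<in> cball (s y) 1"
    using assms(1-3) by (simp_all add: s_dist)
  moreover have "s p \<in> cball (s (midpoint x1 x2)) (\<delta> / d)"
    using assms(1) p by (simp add: s_dist divide_right_mono)
  ultimately have "s x1 \<in> cball 0 1" "s x2 \<in> cball 0 1" "s p \<in> cball (midpoint (s x1) (s x2)) (\<delta> / d)"
    by simp_all
  moreover have "\<delta> / d < modconv TYPE('a) (norm (s x1 - s x2))"
    using assms(1,4) s_dist[of x1 x2] by (simp add: dist_norm pos_divide_less_eq mult.commute)
  ultimately have "s p \<in> cball 0 1"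
    using cball_midpoint_subset_unit_cball by blast
  then have "d * norm (s p) \<le> d"
    using assms(1) by (simp add: mult_left_le)
  then show "p \<in> cball y d"
    using assms(1) s_dist[of y p] \<open>s y = 0\<close> by simp
qed

lemma near_midpoint_in_cball:
  fixes c x1 x2 p :: "'a::real_normed_vector"
  assumes "d > 0" "r \<le> d" "x1 \<in> cball c r" "x2 \<in> cball c r"
    and "dist p (midpoint x1 x2) < d * modconv TYPE('a) (norm (x1 - x2) / d)"
  shows "p \<in> cball c r"
proof (cases "p = c")
  case False
  define m where "m = midpoint x1 x2"
  obtain \<delta> where \<delta>: "dist p m < \<delta>" "\<delta> < d * modconv TYPE('a) (norm (x1 - x2) / d)"
    using assms(5) dense m_def by blast
  then have "0 \<le> \<delta>"
    using zero_le_dist[of p m] by linarith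
  \<comment> \<open>Shift the centre by \<open>d - r\<close> away from \<open>m\<close>; the point beyond \<open>m\<close> at distance \<open>\<delta>\<close> stays
    in the enlarged ball, which bounds \<open>dist m c + \<delta>\<close> by \<open>r\<close>.\<close>
  define v where "v = sgn (if m = c then p - c else m - c)"
  have v: "norm v = 1" "m - c = norm (m - c) *\<^sub>R v"
    using False by (auto simp: v_def norm_sgn sgn_div_norm)
  define y where "y = c - (d - r) *\<^sub>R v"
  have "cball c r \<subseteq> cball y d"
  proof
    fix z assume "z \<in> cball c r"
    moreover have "dist y c = d - r"
      using v(1) assms(2) by (simp add: y_def dist_norm)
    ultimately show "z \<in> cball y d"
      using dist_triangle[of y z c] by simp
  qed
  then have "cball m \<delta> \<subseteq> cball y d"
    using assms(1,3,4) \<delta>(2) unfolding m_def by (intro cball_midpoint_subset_cball) auto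
  moreover have "m + \<delta> *\<^sub>R v \<in> cball m \<delta>"
    using v(1) \<open>0 \<le> \<delta>\<close> by (simp add: dist_norm)
  ultimately have "norm (m + \<delta> *\<^sub>R v - y) \<le> d"
    by (metis subsetD mem_cball dist_norm norm_minus_commute)
  moreover have "m + \<delta> *\<^sub>R v - y = (norm (m - c) + \<delta> + (d - r)) *\<^sub>R v"
  proof -
    have "m + \<delta> *\<^sub>R v - y = (m - c) + (\<delta> + (d - r)) *\<^sub>R v"
      by (simp add: y_def algebra_simps)
    then show ?thesis
      by (metis v(2) scaleR_add_left add.assoc)
  qed
  ultimately have "norm (m - c) + \<delta> + (d - r) \<le> d"
    using v(1) \<open>0 \<le> \<delta>\<close> assms(2) by (simp only: norm_scaleR) simp
  then have "norm (m - c) + \<delta> \<le> r"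
    by simp
  then show ?thesis
    using \<delta>(1) dist_triangle[of p c m] by (simp add: dist_norm norm_minus_commute)
next
  case True
  have "dist c x1 \<le> r"
    using assms(3) by simp
  then have "0 \<le> r"
    using zero_le_dist[of c x1] by linarith
  then show ?thesis
    using True by simp
qed

section \<open>Paths as limits of refining dyadic grids\<close>

definition dyadic_index :: "nat \<Rightarrow> real \<Rightarrow> nat" where
  "dyadic_index k t = nat \<lfloor>t * 2 ^ k\<rfloor>"

lemma dyadic_index_0 [simp]: "dyadic_index k 0 = 0"
  and dyadic_index_1 [simp]: "dyadic_index k 1 = 2 ^ k"
  by (simp_all add: dyadic_index_def nat_power_eq)

lemma dyadic_index_le:
  assumes "0 \<le> t" "t \<le> 1"
  shows "dyadic_index k t \<le> 2 ^ k"
proof -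
  have "t * 2 ^ k \<le> 1 * 2 ^ k"
    using assms by (intro mult_right_mono) auto
  then have "t * 2 ^ k < 2 ^ k + 1"
    by linarith
  then have "\<lfloor>t * 2 ^ k\<rfloor> \<le> 2 ^ k"
    by (simp add: floor_le_iff)
  then show ?thesis
    by (simp add: dyadic_index_def nat_le_iff)
qed

lemma dyadic_index_refine_lower:
  assumes "0 \<le> t"
  shows "dyadic_index k t * 2 ^ m \<le> dyadic_index (k + m) t"
proof -
  have "real_of_int (\<lfloor>t * 2 ^ k\<rfloor> * 2 ^ m) \<le> t * 2 ^ (k + m)"
    by (simp add: power_add mult.assoc[symmetric])
  then have "\<lfloor>t * 2 ^ k\<rfloor> * 2 ^ m \<le> \<lfloor>t * 2 ^ (k + m)\<rfloor>"
    by (simp only: le_floor_iff)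
  then have "nat (\<lfloor>t * 2 ^ k\<rfloor> * 2 ^ m) \<le> nat \<lfloor>t * 2 ^ (k + m)\<rfloor>"
    by (rule nat_mono)
  then show ?thesis
    using assms by (simp add: dyadic_index_def nat_mult_distrib nat_power_eq)
qed

lemma dyadic_index_refine_upper:
  assumes "0 \<le> t"
  shows "dyadic_index (k + m) t \<le> Suc (dyadic_index k t) * 2 ^ m"
proof -
  have "t * 2 ^ (k + m) \<le> (real_of_int \<lfloor>t * 2 ^ k\<rfloor> + 1) * 2 ^ m"
    by (simp add: power_add mult.assoc[symmetric] less_imp_le)
  then have "\<lfloor>t * 2 ^ (k + m)\<rfloor> \<le> (\<lfloor>t * 2 ^ k\<rfloor> + 1) * 2 ^ m"
    by (simp add: floor_le_iff)
  then have "nat \<lfloor>t * 2 ^ (k + m)\<rfloor> \<le> nat ((\<lfloor>t * 2 ^ k\<rfloor> + 1) * 2 ^ m)"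
    by (rule nat_mono)
  then show ?thesis
    using assms by (simp add: dyadic_index_def nat_mult_distrib nat_add_distrib nat_power_eq)
qed

lemma dyadic_index_close:
  assumes "0 \<le> t" "0 \<le> t'" "\<bar>t - t'\<bar> < 1 / 2 ^ k"
  shows "dyadic_index k t \<le> Suc (dyadic_index k t')"
proof -
  have "\<bar>t * 2 ^ k - t' * 2 ^ k\<bar> = \<bar>t - t'\<bar> * 2 ^ k"
    by (simp add: abs_mult flip: left_diff_distrib)
  also have "\<dots> < 1"
    using assms(3) by (simp add: less_divide_eq)
  finally have "t * 2 ^ k \<le> t' * 2 ^ k + 1"
    by (simp add: abs_less_iff)
  then have "\<lfloor>t * 2 ^ k\<rfloor> \<le> \<lfloor>t' * 2 ^ k\<rfloor> + 1"
    using floor_mono by fastforce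
  then show ?thesis
    using assms(1,2) by (simp add: dyadic_index_def)
qed

lemma dist_at_dyadic_neighbours_le:
  assumes step: "\<And>i. i < 2 ^ k \<Longrightarrow> dist (g i) (g (Suc i)) \<le> B" and "0 \<le> B"
    and t: "t \<in> {0..1}" "t' \<in> {0..1}" "dist t t' < 1 / 2 ^ k"
  shows "dist (g (dyadic_index k t)) (g (dyadic_index k t')) \<le> B"
proof -
  have "dyadic_index k t \<le> Suc (dyadic_index k t')" "dyadic_index k t' \<le> Suc (dyadic_index k t)"
    using t by (auto intro!: dyadic_index_close simp: dist_real_def abs_minus_commute)
  moreover have "dyadic_index k t \<le> 2 ^ k" "dyadic_index k t' \<le> 2 ^ k"
    using t by (auto intro: dyadic_index_le)
  ultimately consider "dyadic_index k t = dyadic_index k t'"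
    | "dyadic_index k t = Suc (dyadic_index k t')" "dyadic_index k t' < 2 ^ k"
    | "dyadic_index k t' = Suc (dyadic_index k t)" "dyadic_index k t < 2 ^ k"
    by linarith
  then show ?thesis
    by cases (use \<open>0 \<le> B\<close> step in \<open>auto simp: dist_commute\<close>)
qed

lemma Cauchy_if_eventually_dist_le:
  fixes X :: "nat \<Rightarrow> 'a::metric_space"
  assumes "M \<longlonglongrightarrow> 0" "\<forall>\<^sub>F k in sequentially. \<forall>n\<ge>k. dist (X n) (X k) \<le> M k"
  shows "Cauchy X"
proof (rule metric_CauchyI)
  fix e :: real
  assume "e > 0"
  then have "\<forall>\<^sub>F k in sequentially. M k < e / 2"
    using order_tendstoD(2)[OF assms(1), of "e / 2"] by simp
  then have "\<forall>\<^sub>F k in sequentially. M k < e / 2 \<and> (\<forall>n\<ge>k. dist (X n) (X k) \<le> M k)"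
    using assms(2) by (rule eventually_conj)
  then obtain k where k: "M k < e / 2" "\<forall>n\<ge>k. dist (X n) (X k) \<le> M k"
    unfolding eventually_sequentially by blast
  show "\<exists>N. \<forall>m\<ge>N. \<forall>n\<ge>N. dist (X m) (X n) < e"
  proof (intro exI allI impI)
    fix m n assume "k \<le> m" "k \<le> n"
    then have "dist (X k) (X m) \<le> M k" "dist (X k) (X n) \<le> M k"
      using k(2) by (auto simp: dist_commute)
    then show "dist (X m) (X n) < e"
      using k(1) dist_triangle3[of "X m" "X n" "X k"] by linarith
  qed
qed

lemma dist_refined_dyadic_points_le:
  assumes refine: "\<forall>m i j. i < 2 ^ k \<longrightarrow> i * 2 ^ m \<le> j \<longrightarrow> j \<le> Suc i * 2 ^ m \<longrightarrow>
      dist (g (k + m) j) (g k i) \<le> B"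
    and g_last: "\<And>k. g k (2 ^ k) = b" and "0 \<le> B" and t: "t \<in> {0..1}" and "k \<le> n"
  shows "dist (g n (dyadic_index n t)) (g k (dyadic_index k t)) \<le> B"
proof -
  obtain m where n: "n = k + m"
    using \<open>k \<le> n\<close> le_Suc_ex by blast
  have idx: "dyadic_index k t * 2 ^ m \<le> dyadic_index n t"
    "dyadic_index n t \<le> Suc (dyadic_index k t) * 2 ^ m" "dyadic_index n t \<le> 2 ^ n"
    using t dyadic_index_refine_lower[of t k m] dyadic_index_refine_upper[of t k m]
      dyadic_index_le[of t n] by (simp_all add: n)
  show ?thesis
  proof (cases "dyadic_index k t < 2 ^ k")
    case True
    then show ?thesis
      using refine idx n by simp
  next
    case False
    then have "dyadic_index k t = 2 ^ k"
      using t dyadic_index_le[of t k] by simp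
    moreover from this have "dyadic_index n t = 2 ^ n"
      using idx(1,3) by (simp add: n power_add)
    ultimately show ?thesis
      using \<open>0 \<le> B\<close> by (simp add: g_last)
  qed
qed

lemma uniformly_continuous_on_if_dyadic_approx:
  assumes "M \<longlonglongrightarrow> 0" and step: "\<And>k i. i < 2 ^ k \<Longrightarrow> dist (g k i) (g k (Suc i)) \<le> M k"
    and approx: "\<forall>\<^sub>F k in sequentially. \<forall>t\<in>{0..1}. dist (p t) (g k (dyadic_index k t)) \<le> M k"
  shows "uniformly_continuous_on {0..1} p"
  unfolding uniformly_continuous_on_def
proof (intro allI impI)
  fix e :: real
  assume "e > 0"
  then have "\<forall>\<^sub>F k in sequentially. M k < e / 3"
    using order_tendstoD(2)[OF \<open>M \<longlonglongrightarrow> 0\<close>, of "e / 3"] by simp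
  then have "\<forall>\<^sub>F k in sequentially. M k < e / 3 \<and>
      (\<forall>t\<in>{0..1}. dist (p t) (g k (dyadic_index k t)) \<le> M k)"
    using approx by (rule eventually_conj)
  then obtain k where k: "M k < e / 3"
    and near: "\<And>t. t \<in> {0..1} \<Longrightarrow> dist (p t) (g k (dyadic_index k t)) \<le> M k"
    unfolding eventually_sequentially by blast
  have "0 \<le> M k"
    using step[of 0 k] by (simp add: order_trans[OF zero_le_dist])
  show "\<exists>d>0. \<forall>t\<in>{0..1}. \<forall>t'\<in>{0..1}. dist t' t < d \<longrightarrow> dist (p t') (p t) < e"
  proof (intro exI conjI ballI impI)
    fix t t' :: real assume t: "t \<in> {0..1}" "t' \<in> {0..1}" "dist t' t < 1 / 2 ^ k"
    have "dist (g k (dyadic_index k t')) (g k (dyadic_index k t)) \<le> M k"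
      using t \<open>0 \<le> M k\<close> by (intro dist_at_dyadic_neighbours_le step)
    moreover have "dist (p t') (g k (dyadic_index k t')) \<le> M k" "dist (g k (dyadic_index k t)) (p t) \<le> M k"
      using near t by (auto simp: dist_commute)
    ultimately show "dist (p t') (p t) < e"
      using k dist_triangle[of "p t'" "p t" "g k (dyadic_index k t')"]
        dist_triangle[of "g k (dyadic_index k t')" "p t" "g k (dyadic_index k t)"]
      by linarith
  qed simp
qed

lemma path_from_dyadic_grids:
  fixes g :: "nat \<Rightarrow> nat \<Rightarrow> 'a::complete_space"
  assumes "closed S" and g_in: "\<And>k i. i \<le> 2 ^ k \<Longrightarrow> g k i \<in> S"
    and g_first: "\<And>k. g k 0 = a" and g_last: "\<And>k. g k (2 ^ k) = b"
    and "M \<longlonglongrightarrow> 0" and step: "\<And>k i. i < 2 ^ k \<Longrightarrow> dist (g k i) (g k (Suc i)) \<le> M k"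
    and refine: "\<forall>\<^sub>F k in sequentially. \<forall>m i j. i < 2 ^ k \<longrightarrow> i * 2 ^ m \<le> j \<longrightarrow>
        j \<le> Suc i * 2 ^ m \<longrightarrow> dist (g (k + m) j) (g k i) \<le> M k"
  shows "\<exists>p. path p \<and> path_image p \<subseteq> S \<and> pathstart p = a \<and> pathfinish p = b"
proof -
  define X where "X t k = g k (dyadic_index k t)" for t :: real and k
  have close: "\<forall>\<^sub>F k in sequentially. \<forall>t\<in>{0..1}. \<forall>n\<ge>k. dist (X t n) (X t k) \<le> M k"
    using refine
  proof eventually_elim
    case (elim k)
    have "0 \<le> M k"
      using step[of 0 k] by (simp add: order_trans[OF zero_le_dist])
    then show ?case
      unfolding X_def using elim g_last by (blast intro: dist_refined_dyadic_points_le)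
  qed
  define p where "p t = lim (X t)" for t
  have X_tendsto: "X t \<longlonglongrightarrow> p t" if "t \<in> {0..1}" for t
  proof -
    have "Cauchy (X t)"
      using close that by (intro Cauchy_if_eventually_dist_le[OF \<open>M \<longlonglongrightarrow> 0\<close>]) (auto elim: eventually_mono)
    then show ?thesis
      by (simp add: p_def Cauchy_convergent_iff convergent_LIMSEQ_iff)
  qed
  have "\<forall>\<^sub>F k in sequentially. \<forall>t\<in>{0..1}. dist (p t) (X t k) \<le> M k"
    using close
  proof eventually_elim
    case (elim k)
    show ?case
    proof
      fix t :: real assume t: "t \<in> {0..1}"
      have "(\<lambda>n. dist (X t n) (X t k)) \<longlonglongrightarrow> dist (p t) (X t k)"
        by (intro tendsto_dist X_tendsto[OF t] tendsto_const)
      then show "dist (p t) (X t k) \<le> M k"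
        by (rule LIMSEQ_le_const2) (use elim t in blast)
    qed
  qed
  then have "uniformly_continuous_on {0..1} p"
    unfolding X_def using \<open>M \<longlonglongrightarrow> 0\<close> step by (intro uniformly_continuous_on_if_dyadic_approx)
  moreover have "p t \<in> S" if "t \<in> {0..1}" for t :: real
  proof -
    have "X t n \<in> S" for n
      using that by (simp add: X_def g_in dyadic_index_le)
    then show ?thesis
      using \<open>closed S\<close> X_tendsto[OF that] by (meson closed_sequential_limits)
  qed
  moreover have "X 0 = (\<lambda>k. a)" "X 1 = (\<lambda>k. b)"
    by (simp_all add: X_def g_first g_last fun_eq_iff)
  then have "p 0 = a" "p 1 = b"
    by (simp_all add: p_def)
  ultimately show ?thesis
    by (intro exI[of _ p])
      (auto simp: path_def path_image_def pathstart_def pathfinish_def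
        intro: uniformly_continuous_imp_continuous)
qed

primrec dyadic_grid :: "('a \<Rightarrow> 'a \<Rightarrow> 'a) \<Rightarrow> 'a \<Rightarrow> 'a \<Rightarrow> nat \<Rightarrow> nat \<Rightarrow> 'a" where
  "dyadic_grid ch a b 0 = (\<lambda>i. if i = 0 then a else b)"
| "dyadic_grid ch a b (Suc k) = (\<lambda>j. if even j then dyadic_grid ch a b k (j div 2)
      else ch (dyadic_grid ch a b k (j div 2)) (dyadic_grid ch a b k (Suc (j div 2))))"

lemma dyadic_grid_first: "dyadic_grid ch a b k 0 = a"
  and dyadic_grid_last: "dyadic_grid ch a b k (2 ^ k) = b"
  by (induction k) auto

lemma dyadic_grid_in:
  assumes "a \<in> S" "b \<in> S" "\<And>x y. x \<in> S \<Longrightarrow> y \<in> S \<Longrightarrow> ch x y \<in> S" "i \<le> 2 ^ k"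
  shows "dyadic_grid ch a b k i \<in> S"
  using assms(4)
proof (induction k arbitrary: i)
  case (Suc k)
  show ?case
  proof (cases "even i")
    case False
    then have "i \<noteq> 2 ^ Suc k"
      by auto
    then have "i < 2 ^ k * 2"
      using Suc.prems by simp
    then have "i div 2 < 2 ^ k"
      by (rule less_mult_imp_div_less)
    then show ?thesis
      using False Suc.IH assms(3) by simp
  qed (use Suc in auto)
qed (use assms in auto)

text \<open>The refinements of the cell between the points \<open>i\<close> and \<open>i + 1\<close> of level \<open>k\<close> are the
  points \<open>j\<close> of level \<open>k + m\<close> with \<open>i * 2 ^ m \<le> j \<le> (i + 1) * 2 ^ m\<close>.\<close>
lemma dyadic_grid_cell_in:
  assumes "a \<in> S" "b \<in> S" "\<And>x y. x \<in> S \<Longrightarrow> y \<in> S \<Longrightarrow> ch x y \<in> S"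
    and B: "\<And>x y. x \<in> S \<Longrightarrow> y \<in> S \<Longrightarrow> x \<in> B \<Longrightarrow> y \<in> B \<Longrightarrow> ch x y \<in> B"
    and "i < 2 ^ k" "dyadic_grid ch a b k i \<in> B" "dyadic_grid ch a b k (Suc i) \<in> B"
    and "i * 2 ^ m \<le> j" "j \<le> Suc i * 2 ^ m"
  shows "dyadic_grid ch a b (k + m) j \<in> B"
  using assms(8,9)
proof (induction m arbitrary: j)
  case 0
  then have "j = i \<or> j = Suc i"
    by auto
  then show ?case
    using assms(6,7) by auto
next
  case (Suc m)
  have lo: "i * 2 ^ m \<le> j div 2" and hi: "j div 2 \<le> Suc i * 2 ^ m"
    using Suc.prems by auto
  have "Suc i * 2 ^ m \<le> 2 ^ k * 2 ^ m"
    using assms(5) by (intro mult_right_mono) auto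
  then have "Suc i * 2 ^ m \<le> 2 ^ (k + m)"
    by (simp add: power_add)
  then have in_S: "dyadic_grid ch a b (k + m) (j div 2) \<in> S" if "j div 2 \<le> Suc i * 2 ^ m" for j
    using that assms(1-3) by (intro dyadic_grid_in) auto
  show ?case
  proof (cases "even j")
    case False
    then have "j \<noteq> Suc i * 2 ^ Suc m"
      by auto
    then have "j < Suc i * 2 ^ Suc m"
      using Suc.prems(2) by simp
    then have hi': "Suc (j div 2) \<le> Suc i * 2 ^ m"
      by (simp add: less_mult_imp_div_less Suc_leI)
    have "dyadic_grid ch a b (k + m) (Suc (j div 2)) \<in> S"
      using in_S[of "Suc j"] hi' False by simp
    then show ?thesis
      using False B in_S[OF hi] Suc.IH[OF lo hi] Suc.IH[OF _ hi'] lo by simp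
  qed (use Suc.IH[OF lo hi] in simp)
qed

lemma dist_dyadic_grid_refinement_le:
  assumes "a \<in> S" "b \<in> S" "\<And>x y. x \<in> S \<Longrightarrow> y \<in> S \<Longrightarrow> ch x y \<in> S"
    and ch_cball: "\<And>c r x y. r \<le> R \<Longrightarrow> x \<in> S \<Longrightarrow> y \<in> S \<Longrightarrow> x \<in> cball c r \<Longrightarrow> y \<in> cball c r
        \<Longrightarrow> ch x y \<in> cball c r"
    and "dist (dyadic_grid ch a b k i) (dyadic_grid ch a b k (Suc i)) \<le> R"
    and "i < 2 ^ k" "i * 2 ^ m \<le> j" "j \<le> Suc i * 2 ^ m"
  shows "dist (dyadic_grid ch a b (k + m) j) (dyadic_grid ch a b k i)
    \<le> dist (dyadic_grid ch a b k i) (dyadic_grid ch a b k (Suc i))"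
proof -
  let ?c = "dyadic_grid ch a b k i" and ?r = "dist (dyadic_grid ch a b k i) (dyadic_grid ch a b k (Suc i))"
  have "dyadic_grid ch a b (k + m) j \<in> cball ?c ?r"
    using assms(1-3) ch_cball[OF assms(5)] assms(6-8) by (intro dyadic_grid_cell_in[where S = S]) simp_all
  then show ?thesis
    by (simp add: dist_commute)
qed

definition grid_mesh :: "(nat \<Rightarrow> nat \<Rightarrow> 'a::metric_space) \<Rightarrow> nat \<Rightarrow> real" where
  "grid_mesh g k = (MAX i\<in>{..<2 ^ k}. dist (g k i) (g k (Suc i)))"

lemma dist_le_grid_mesh: "i < 2 ^ k \<Longrightarrow> dist (g k i) (g k (Suc i)) \<le> grid_mesh g k"
  unfolding grid_mesh_def by (rule Max_ge) auto

lemma grid_mesh_attained: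
  obtains i where "i < 2 ^ k" "grid_mesh g k = dist (g k i) (g k (Suc i))"
proof -
  have "grid_mesh g k \<in> (\<lambda>i. dist (g k i) (g k (Suc i))) ` {..<2 ^ k}"
    unfolding grid_mesh_def by (rule Max_in) (auto simp: lessThan_empty_iff)
  then show ?thesis
    using that by auto
qed

lemma dyadic_grid_mesh_Suc_le:
  assumes "a \<in> S" "b \<in> S" "\<And>x y. x \<in> S \<Longrightarrow> y \<in> S \<Longrightarrow> ch x y \<in> S" "\<And>x. ch x x = x"
    and ch_dist: "\<And>x y. x \<in> S \<Longrightarrow> y \<in> S \<Longrightarrow> x \<noteq> y \<Longrightarrow>
        dist x (ch x y) \<le> \<phi> (dist x y) \<and> dist (ch x y) y \<le> \<phi> (dist x y)"
    and \<phi>_mono: "\<And>\<eta> \<eta>'. 0 < \<eta> \<Longrightarrow> \<eta> \<le> \<eta>' \<Longrightarrow> \<eta>' \<le> D \<Longrightarrow> \<phi> \<eta> \<le> \<phi> \<eta>'"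
    and \<phi>_le: "\<And>\<eta>. 0 < \<eta> \<Longrightarrow> \<eta> \<le> D \<Longrightarrow> 0 \<le> \<phi> \<eta> \<and> \<phi> \<eta> \<le> \<eta>"
    and "grid_mesh (dyadic_grid ch a b) k \<le> D"
  shows "grid_mesh (dyadic_grid ch a b) (Suc k) \<le> grid_mesh (dyadic_grid ch a b) k"
    and "0 < grid_mesh (dyadic_grid ch a b) k \<Longrightarrow>
      grid_mesh (dyadic_grid ch a b) (Suc k) \<le> \<phi> (grid_mesh (dyadic_grid ch a b) k)"
proof -
  let ?g = "dyadic_grid ch a b" and ?M = "grid_mesh (dyadic_grid ch a b)"
  obtain j where j: "j < 2 ^ Suc k" "?M (Suc k) = dist (?g (Suc k) j) (?g (Suc k) (Suc j))"
    by (rule grid_mesh_attained)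
  define x where "x = ?g k (j div 2)"
  define y where "y = ?g k (Suc (j div 2))"
  have "j div 2 < 2 ^ k"
    using j(1) by (simp add: less_mult_imp_div_less)
  then have "x \<in> S" "y \<in> S" and xy_le: "dist x y \<le> ?M k"
    using assms(1-3) by (auto simp: x_def y_def intro: dyadic_grid_in dist_le_grid_mesh)
  have "0 \<le> ?M k"
    using xy_le zero_le_dist order_trans by blast
  have M_Suc: "?M (Suc k) = (if even j then dist x (ch x y) else dist (ch x y) y)"
    using j(2) by (auto simp: x_def y_def)
  show "?M (Suc k) \<le> ?M k" "0 < ?M k \<Longrightarrow> ?M (Suc k) \<le> \<phi> (?M k)"
  proof (atomize (full), cases "x = y")
    case True
    then have "?M (Suc k) = 0"
      using M_Suc assms(4) by simp
    then show "?M (Suc k) \<le> ?M k \<and> (0 < ?M k \<longrightarrow> ?M (Suc k) \<le> \<phi> (?M k))"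
      using \<open>0 \<le> ?M k\<close> \<phi>_le assms(8) by auto
  next
    case False
    then have "?M (Suc k) \<le> \<phi> (dist x y)"
      using M_Suc ch_dist[OF \<open>x \<in> S\<close> \<open>y \<in> S\<close>] by auto
    moreover have "\<phi> (dist x y) \<le> dist x y" "\<phi> (dist x y) \<le> \<phi> (?M k)"
      using False xy_le assms(8) \<phi>_le \<phi>_mono by auto
    ultimately show "?M (Suc k) \<le> ?M k \<and> (0 < ?M k \<longrightarrow> ?M (Suc k) \<le> \<phi> (?M k))"
      using xy_le by linarith
  qed
qed

lemma contracting_tendsto_zero:
  fixes M :: "nat \<Rightarrow> real"
  assumes "decseq M" "\<And>k. 0 \<le> M k" "M 0 \<le> D"
    and step: "\<And>k. 0 < M k \<Longrightarrow> M (Suc k) \<le> \<phi> (M k)"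
    and \<phi>: "\<And>L. 0 < L \<Longrightarrow> L \<le> D \<Longrightarrow> \<exists>u>L. \<exists>c>0. \<forall>\<eta>. L \<le> \<eta> \<and> \<eta> < u \<longrightarrow> \<phi> \<eta> \<le> \<eta> - c"
  shows "M \<longlonglongrightarrow> 0"
proof -
  obtain L where L: "M \<longlonglongrightarrow> L" "\<And>k. L \<le> M k"
    using decseq_convergent[OF assms(1), of 0] assms(2) by auto
  have "L \<le> 0"
  proof (rule ccontr)
    assume "\<not> L \<le> 0"
    moreover have "L \<le> D"
      using L(2)[of 0] assms(3) by simp
    ultimately obtain u c where u: "L < u" "c > 0" "\<And>\<eta>. L \<le> \<eta> \<Longrightarrow> \<eta> < u \<Longrightarrow> \<phi> \<eta> \<le> \<eta> - c"
      using \<phi>[of L] by auto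
    have "\<forall>\<^sub>F k in sequentially. M k < u"
      using L(1) u(1) by (rule order_tendstoD(2))
    then have "\<forall>\<^sub>F k in sequentially. M (Suc k) \<le> M k - c"
    proof eventually_elim
      case (elim k)
      have "0 < M k"
        using L(2)[of k] \<open>\<not> L \<le> 0\<close> by linarith
      then show ?case
        using step[of k] u(3)[of "M k"] L(2)[of k] elim by linarith
    qed
    moreover have "(\<lambda>k. M (Suc k)) \<longlonglongrightarrow> L" "(\<lambda>k. M k - c) \<longlonglongrightarrow> L - c"
      using L(1) by (auto intro: LIMSEQ_Suc tendsto_intros)
    ultimately have "L \<le> L - c"
      by (intro tendsto_le[OF sequentially_bot])
    then show False
      using u(2) by simp
  qed
  moreover have "0 \<le> L"
    using L(1) assms(2) by (intro LIMSEQ_le_const) auto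
  ultimately show ?thesis
    using L(1) by simp
qed

text \<open>Here \<open>ch\<close> fills the dyadic grids. Its last property keeps the refinements of a grid
  cell close to the cell; the contraction \<open>\<phi>\<close> makes the mesh of the grids tend to zero.\<close>
lemma path_connected_if_approx_midpoints:
  fixes S :: "'a::complete_space set"
  assumes "closed S" "R > 0" and diam: "\<And>x y. x \<in> S \<Longrightarrow> y \<in> S \<Longrightarrow> dist x y \<le> D"
    and ch_in: "\<And>x y. x \<in> S \<Longrightarrow> y \<in> S \<Longrightarrow> ch x y \<in> S" and ch_eq: "\<And>x. ch x x = x"
    and ch_dist: "\<And>x y. x \<in> S \<Longrightarrow> y \<in> S \<Longrightarrow> x \<noteq> y \<Longrightarrow>
        dist x (ch x y) \<le> \<phi> (dist x y) \<and> dist (ch x y) y \<le> \<phi> (dist x y)"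
    and ch_cball: "\<And>c r x y. r \<le> R \<Longrightarrow> x \<in> S \<Longrightarrow> y \<in> S \<Longrightarrow> x \<in> cball c r \<Longrightarrow> y \<in> cball c r
        \<Longrightarrow> ch x y \<in> cball c r"
    and \<phi>_mono: "\<And>\<eta> \<eta>'. 0 < \<eta> \<Longrightarrow> \<eta> \<le> \<eta>' \<Longrightarrow> \<eta>' \<le> D \<Longrightarrow> \<phi> \<eta> \<le> \<phi> \<eta>'"
    and \<phi>_le: "\<And>\<eta>. 0 < \<eta> \<Longrightarrow> \<eta> \<le> D \<Longrightarrow> 0 \<le> \<phi> \<eta> \<and> \<phi> \<eta> \<le> \<eta>"
    and \<phi>_contract: "\<And>L. 0 < L \<Longrightarrow> L \<le> D \<Longrightarrow> \<exists>u>L. \<exists>c>0. \<forall>\<eta>. L \<le> \<eta> \<and> \<eta> < u \<longrightarrow> \<phi> \<eta> \<le> \<eta> - c"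
  shows "path_connected S"
  unfolding path_connected_def
proof (intro ballI)
  fix a b assume ab: "a \<in> S" "b \<in> S"
  define g where "g = dyadic_grid ch a b"
  define M where "M = grid_mesh g"
  have g_in: "g k i \<in> S" if "i \<le> 2 ^ k" for k i
    unfolding g_def using ab ch_in that by (rule dyadic_grid_in)
  have M_le: "M k \<le> D" for k
  proof -
    obtain i where "i < 2 ^ k" "M k = dist (g k i) (g k (Suc i))"
      unfolding M_def by (rule grid_mesh_attained)
    then show ?thesis
      using diam g_in by simp
  qed
  note mesh_Suc = dyadic_grid_mesh_Suc_le[OF ab ch_in ch_eq ch_dist \<phi>_mono \<phi>_le M_le[unfolded M_def g_def]]
  have step: "dist (g k i) (g k (Suc i)) \<le> M k" if "i < 2 ^ k" for k i
    unfolding M_def using that by (rule dist_le_grid_mesh)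
  have "M \<longlonglongrightarrow> 0"
  proof (rule contracting_tendsto_zero[where D = D])
    show "decseq M"
      using mesh_Suc(1) by (intro decseq_SucI) (simp add: M_def g_def)
    show "0 \<le> M k" for k
      using step[of 0 k] by (simp add: order_trans[OF zero_le_dist])
    show "M (Suc k) \<le> \<phi> (M k)" if "0 < M k" for k
      using that mesh_Suc(2) by (simp add: M_def g_def)
  qed (use M_le \<phi>_contract in auto)
  moreover have "\<forall>\<^sub>F k in sequentially. \<forall>m i j. i < 2 ^ k \<longrightarrow> i * 2 ^ m \<le> j \<longrightarrow>
      j \<le> Suc i * 2 ^ m \<longrightarrow> dist (g (k + m) j) (g k i) \<le> M k"
    using order_tendstoD(2)[OF \<open>M \<longlonglongrightarrow> 0\<close> \<open>R > 0\<close>]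
  proof eventually_elim
    case (elim k)
    show ?case
    proof (intro allI impI)
      fix m i j assume ij: "i < 2 ^ k" "i * 2 ^ m \<le> j" "j \<le> Suc i * 2 ^ m"
      have "dist (g k i) (g k (Suc i)) \<le> M k"
        using step ij(1) by blast
      moreover from this have "dist (g (k + m) j) (g k i) \<le> dist (g k i) (g k (Suc i))"
        unfolding g_def using ab ch_in ch_cball elim ij by (intro dist_dyadic_grid_refinement_le) auto
      ultimately show "dist (g (k + m) j) (g k i) \<le> M k"
        by linarith
    qed
  qed
  ultimately show "\<exists>p. path p \<and> path_image p \<subseteq> S \<and> pathstart p = a \<and> pathfinish p = b"
    using \<open>closed S\<close> g_in step
    by (intro path_from_dyadic_grids[where g = g and M = M])
      (auto simp: g_def dyadic_grid_first dyadic_grid_last)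
qed

section \<open>Intersections with small balls\<close>

lemma diameter_Int_cball_le:
  fixes A :: "'a::real_normed_vector set"
  assumes "0 \<le> r"
  shows "diameter (A \<inter> cball x r) \<le> 2 * r"
proof (rule diameter_le)
  fix y1 y2 assume "y1 \<in> A \<inter> cball x r" "y2 \<in> A \<inter> cball x r"
  then show "norm (y1 - y2) \<le> 2 * r"
    using dist_triangle3[of y1 y2 x] by (simp add: dist_norm)
qed (use assms in simp)

lemma weakly_convex_on_if_modnonconv_le:
  assumes "weakly_convex_on A D" "D' \<le> D"
    and "\<And>\<epsilon>. 0 < \<epsilon> \<Longrightarrow> \<epsilon> < D' \<Longrightarrow> modnonconv S \<epsilon> \<le> modnonconv A \<epsilon>"
  shows "weakly_convex_on S D'"
  using assms unfolding weakly_convex_on_def by (meson le_less_trans less_le_trans)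

lemma gamma0_Int_cball_le:
  fixes A :: "'a::real_normed_vector set"
  assumes "0 < d" "r \<le> d" "0 < t"
    and dom: "\<And>\<eta>. 0 < \<eta> \<Longrightarrow> \<eta> \<le> 2 * r \<Longrightarrow> gamma0 A \<eta> < d * modconv TYPE('a) (\<eta> / d)"
  shows "gamma0 (A \<inter> cball x r) t \<le> gamma0 A t"
proof (rule dense_ge)
  fix \<gamma> assume "gamma0 A t < \<gamma>"
  then have "0 < \<gamma>"
    using gamma0_nonneg[OF \<open>0 < t\<close>, of A] by linarith
  have "cball (midpoint y1 y2) \<gamma> \<inter> (A \<inter> cball x r) \<noteq> {}"
    if y: "y1 \<in> A \<inter> cball x r" "y2 \<in> A \<inter> cball x r" "norm (y1 - y2) \<le> t" for y1 y2
  proof (cases "y1 = y2")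
    case True
    then have "y1 \<in> cball (midpoint y1 y2) \<gamma> \<inter> (A \<inter> cball x r)"
      using y \<open>0 < \<gamma>\<close> by simp
    then show ?thesis
      by blast
  next
    case False
    define \<eta> where "\<eta> = norm (y1 - y2)"
    have "dist x y1 \<le> r" "dist x y2 \<le> r"
      using y(1,2) by simp_all
    then have "0 < \<eta>" "\<eta> \<le> 2 * r"
      using False dist_triangle3[of y1 y2 x] by (simp_all add: \<eta>_def dist_norm)
    moreover have "gamma0 A \<eta> \<le> gamma0 A t"
      using \<open>0 < \<eta>\<close> y(3) by (simp add: \<eta>_def gamma0_mono)
    ultimately have less: "gamma0 A \<eta> < min \<gamma> (d * modconv TYPE('a) (\<eta> / d))"
      using \<open>gamma0 A t < \<gamma>\<close> dom by simp
    have "y1 \<in> A" "y2 \<in> A" "norm (y1 - y2) \<le> \<eta>"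
      using y by (simp_all add: \<eta>_def)
    then obtain p where "p \<in> A" and p: "dist p (midpoint y1 y2) < min \<gamma> (d * modconv TYPE('a) (\<eta> / d))"
      using \<open>0 < \<eta>\<close> less by (rule gamma0_less_imp_near_midpoint)
    have "dist p (midpoint y1 y2) < d * modconv TYPE('a) (norm (y1 - y2) / d)"
      using p by (simp add: \<eta>_def)
    moreover have "y1 \<in> cball x r" "y2 \<in> cball x r"
      using y(1,2) by simp_all
    ultimately have "p \<in> cball x r"
      using assms(1,2) near_midpoint_in_cball by blast
    moreover have "p \<in> cball (midpoint y1 y2) \<gamma>"
      using p by (simp add: dist_commute)
    ultimately show ?thesis
      using \<open>p \<in> A\<close> by blast
  qed
  then have "\<gamma> \<in> approx_midpoint_radii (A \<inter> cball x r) t"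
    using \<open>0 < \<gamma>\<close> by (simp add: approx_midpoint_radii_def)
  then show "gamma0 (A \<inter> cball x r) t \<le> \<gamma>"
    unfolding gamma0_eq_Inf by (rule cInf_lower[OF _ bdd_below_approx_midpoint_radii])
qed

lemma modnonconv_Int_cball_le:
  fixes A :: "'a::real_normed_vector set"
  assumes "0 < d" "r \<le> d" "0 \<le> \<epsilon>"
    and "\<And>\<eta>. 0 < \<eta> \<Longrightarrow> \<eta> \<le> 2 * r \<Longrightarrow> gamma0 A \<eta> < d * modconv TYPE('a) (\<eta> / d)"
  shows "modnonconv (A \<inter> cball x r) \<epsilon> \<le> modnonconv A \<epsilon>"
  using assms by (intro modnonconv_le_modnonconv gamma0_Int_cball_le) auto

lemma approx_midpoint_function:
  fixes A :: "'a::real_normed_vector set"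
  assumes "S \<subseteq> A"
    and "\<And>x1 x2. x1 \<in> S \<Longrightarrow> x2 \<in> S \<Longrightarrow> x1 \<noteq> x2 \<Longrightarrow> gamma0 A (dist x1 x2) < \<tau> (dist x1 x2)"
  obtains ch where "\<And>x. ch x x = x"
    and "\<And>x1 x2. x1 \<in> S \<Longrightarrow> x2 \<in> S \<Longrightarrow> x1 \<noteq> x2 \<Longrightarrow>
      ch x1 x2 \<in> A \<and> dist (ch x1 x2) (midpoint x1 x2) < \<tau> (dist x1 x2)"
proof -
  define P where "P x1 x2 p \<longleftrightarrow> p \<in> A \<and> dist p (midpoint x1 x2) < \<tau> (dist x1 x2)" for x1 x2 p
  define ch where "ch x1 x2 = (if x1 = x2 then x1 else Eps (P x1 x2))" for x1 x2
  have "P x1 x2 (ch x1 x2)" if x: "x1 \<in> S" "x2 \<in> S" "x1 \<noteq> x2" for x1 x2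
  proof -
    have "x1 \<in> A" "x2 \<in> A" "norm (x1 - x2) \<le> dist x1 x2" "dist x1 x2 > 0"
      using x assms(1) by (auto simp: dist_norm)
    then obtain p where "P x1 x2 p"
      using assms(2)[OF x] unfolding P_def by (rule gamma0_less_imp_near_midpoint) blast
    then show ?thesis
      using x(3) someI[of "P x1 x2" p] by (simp add: ch_def)
  qed
  then show ?thesis
    using that[of ch] by (simp add: ch_def P_def)
qed

lemma gamma0_uniformly_below_half:
  assumes "0 < L" "modnonconv A L < L / 2"
  obtains u c where "L < u" "0 < c" "\<And>\<eta>. L \<le> \<eta> \<Longrightarrow> \<eta> < u \<Longrightarrow> gamma0 A \<eta> \<le> \<eta> / 2 - c"
proof -
  define c where "c = (L / 2 - modnonconv A L) / 2"
  have "0 < c"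
    using assms(2) by (simp add: c_def)
  have "(INF t\<in>{L<..}. gamma0 A t) < modnonconv A L + c"
    using modnonconv_eq_INF[OF assms(1), of A] \<open>0 < c\<close> by simp
  then obtain u where "L < u" "gamma0 A u < modnonconv A L + c"
    using cInf_less_iff[OF _ bdd_below_gamma0_image[OF assms(1)]] by auto
  moreover have "gamma0 A \<eta> \<le> \<eta> / 2 - c" if "L \<le> \<eta>" "\<eta> < u" for \<eta>
  proof -
    have "gamma0 A \<eta> \<le> gamma0 A u"
      using that assms(1) by (intro gamma0_mono) auto
    then show ?thesis
      using that(1) \<open>gamma0 A u < modnonconv A L + c\<close> by (simp add: c_def field_simps)
  qed
  ultimately show ?thesis
    using \<open>0 < c\<close> that by blast
qed

lemma approx_midpoint_function_Int_cball:
  fixes A :: "'a::real_normed_vector set" and x :: 'a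
  assumes "0 < d" "r \<le> d"
    and wc: "\<And>\<eta>. 0 < \<eta> \<Longrightarrow> \<eta> \<le> 2 * r \<Longrightarrow> modnonconv A \<eta> < \<eta> / 2"
    and dom: "\<And>\<eta>. 0 < \<eta> \<Longrightarrow> \<eta> \<le> 2 * r \<Longrightarrow> gamma0 A \<eta> < d * modconv TYPE('a) (\<eta> / d)"
  defines "S \<equiv> A \<inter> cball x r"
  obtains ch where "\<And>y. ch y y = y" and "\<And>y1 y2. y1 \<in> S \<Longrightarrow> y2 \<in> S \<Longrightarrow> ch y1 y2 \<in> S"
    and "\<And>y1 y2. y1 \<in> S \<Longrightarrow> y2 \<in> S \<Longrightarrow> y1 \<noteq> y2 \<Longrightarrow>
      dist y1 (ch y1 y2) \<le> 3 * dist y1 y2 / 4 + gamma0 A (dist y1 y2) / 2 \<and>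
      dist (ch y1 y2) y2 \<le> 3 * dist y1 y2 / 4 + gamma0 A (dist y1 y2) / 2"
    and "\<And>c r' y1 y2. r' \<le> d \<Longrightarrow> y1 \<in> S \<Longrightarrow> y2 \<in> S \<Longrightarrow> y1 \<in> cball c r' \<Longrightarrow> y2 \<in> cball c r'
      \<Longrightarrow> ch y1 y2 \<in> cball c r'"
proof -
  define \<tau> where "\<tau> \<eta> = min (d * modconv TYPE('a) (\<eta> / d)) (\<eta> / 4 + gamma0 A \<eta> / 2)" for \<eta>
  have "gamma0 A (dist y1 y2) < \<tau> (dist y1 y2)" if "y1 \<in> S" "y2 \<in> S" "y1 \<noteq> y2" for y1 y2
  proof -
    have \<eta>: "0 < dist y1 y2" "dist y1 y2 \<le> 2 * r"
      using that dist_triangle3[of y1 y2 x] by (auto simp: S_def)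
    then have "gamma0 A (dist y1 y2) < dist y1 y2 / 2"
      using wc[OF \<eta>] gamma0_le_modnonconv[OF \<eta>(1), of A] by linarith
    then show ?thesis
      using dom[OF \<eta>] by (simp add: \<tau>_def)
  qed
  moreover have "S \<subseteq> A"
    by (simp add: S_def)
  ultimately obtain ch where ch_eq: "\<And>y. ch y y = y" and ch: "\<And>y1 y2. y1 \<in> S \<Longrightarrow> y2 \<in> S \<Longrightarrow>
      y1 \<noteq> y2 \<Longrightarrow> ch y1 y2 \<in> A \<and> dist (ch y1 y2) (midpoint y1 y2) < \<tau> (dist y1 y2)"
    using approx_midpoint_function by metis
  have ch_cball: "ch y1 y2 \<in> cball c r'"
    if "r' \<le> d" "y1 \<in> S" "y2 \<in> S" "y1 \<in> cball c r'" "y2 \<in> cball c r'" for c r' y1 y2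
  proof (cases "y1 = y2")
    case False
    then show ?thesis
      using ch[OF that(2,3) False] near_midpoint_in_cball[OF assms(1) that(1,4,5)]
      by (simp add: \<tau>_def dist_norm)
  qed (use that ch_eq in simp)
  have ch_in: "ch y1 y2 \<in> S" if "y1 \<in> S" "y2 \<in> S" for y1 y2
    using that ch ch_cball[OF assms(2) that] ch_eq by (cases "y1 = y2") (auto simp: S_def)
  have ch_dist: "dist y1 (ch y1 y2) \<le> 3 * dist y1 y2 / 4 + gamma0 A (dist y1 y2) / 2 \<and>
      dist (ch y1 y2) y2 \<le> 3 * dist y1 y2 / 4 + gamma0 A (dist y1 y2) / 2"
    if "y1 \<in> S" "y2 \<in> S" "y1 \<noteq> y2" for y1 y2
    using ch[OF that] dist_triangle[of y1 "ch y1 y2" "midpoint y1 y2"]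
      dist_triangle[of "ch y1 y2" y2 "midpoint y1 y2"]
    by (simp add: \<tau>_def dist_midpoint dist_commute)
  show ?thesis
    by (rule that[OF ch_eq ch_in ch_dist ch_cball])
qed

lemma path_connected_Int_cball:
  fixes A :: "'a::banach set"
  assumes "closed A" "0 < d" "r \<le> d"
    and wc: "\<And>\<eta>. 0 < \<eta> \<Longrightarrow> \<eta> \<le> 2 * r \<Longrightarrow> modnonconv A \<eta> < \<eta> / 2"
    and dom: "\<And>\<eta>. 0 < \<eta> \<Longrightarrow> \<eta> \<le> 2 * r \<Longrightarrow> gamma0 A \<eta> < d * modconv TYPE('a) (\<eta> / d)"
  shows "path_connected (A \<inter> cball x r)"
proof -
  define \<phi> where "\<phi> \<eta> = 3 * \<eta> / 4 + gamma0 A \<eta> / 2" for \<eta>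
  obtain ch where ch_eq: "\<And>y. ch y y = y" and ch_in: "\<And>y1 y2. y1 \<in> A \<inter> cball x r \<Longrightarrow> y2 \<in> A \<inter> cball x r \<Longrightarrow>
      ch y1 y2 \<in> A \<inter> cball x r"
    and ch_dist: "\<And>y1 y2. y1 \<in> A \<inter> cball x r \<Longrightarrow> y2 \<in> A \<inter> cball x r \<Longrightarrow> y1 \<noteq> y2 \<Longrightarrow>
      dist y1 (ch y1 y2) \<le> \<phi> (dist y1 y2) \<and> dist (ch y1 y2) y2 \<le> \<phi> (dist y1 y2)"
    and ch_cball: "\<And>c r' y1 y2. r' \<le> d \<Longrightarrow> y1 \<in> A \<inter> cball x r \<Longrightarrow> y2 \<in> A \<inter> cball x r \<Longrightarrow>
      y1 \<in> cball c r' \<Longrightarrow> y2 \<in> cball c r' \<Longrightarrow> ch y1 y2 \<in> cball c r'"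
    using approx_midpoint_function_Int_cball[OF assms(2,3) wc dom, of x, folded \<phi>_def] by blast
  have diam: "dist y1 y2 \<le> 2 * r" if "y1 \<in> A \<inter> cball x r" "y2 \<in> A \<inter> cball x r" for y1 y2
    using that dist_triangle3[of y1 y2 x] by simp
  have \<phi>_mono: "\<phi> \<eta> \<le> \<phi> \<eta>'" if "0 < \<eta>" "\<eta> \<le> \<eta>'" for \<eta> \<eta>'
    using that gamma0_mono[OF that, of A] by (simp add: \<phi>_def)
  have \<phi>_le: "0 \<le> \<phi> \<eta> \<and> \<phi> \<eta> \<le> \<eta>" if "0 < \<eta>" for \<eta>
    using gamma0_nonneg[OF that, of A] gamma0_le_half[OF that, of A] that by (simp add: \<phi>_def)
  have \<phi>_contract: "\<exists>u>L. \<exists>c>0. \<forall>\<eta>. L \<le> \<eta> \<and> \<eta> < u \<longrightarrow> \<phi> \<eta> \<le> \<eta> - c"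
    if L: "0 < L" "L \<le> 2 * r" for L
  proof -
    obtain u c where "L < u" "0 < c" "\<And>\<eta>. L \<le> \<eta> \<Longrightarrow> \<eta> < u \<Longrightarrow> gamma0 A \<eta> \<le> \<eta> / 2 - c"
      using gamma0_uniformly_below_half[OF L(1) wc[OF L]] by blast
    moreover have "\<phi> \<eta> \<le> \<eta> - c / 2" if "L \<le> \<eta>" "\<eta> < u" for \<eta>
      using calculation(3)[OF that] by (simp add: \<phi>_def)
    ultimately show ?thesis
      by (intro exI[of _ u] conjI exI[of _ "c / 2"] allI impI) auto
  qed
  have "closed (A \<inter> cball x r)"
    using assms(1) by (simp add: closed_Int)
  then show ?thesis
    using assms(2) diam ch_in ch_eq ch_dist ch_cball
    by (rule path_connected_if_approx_midpoints[where \<phi> = \<phi>]) (use \<phi>_mono \<phi>_le \<phi>_contract in auto)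
qed

theorem theorem3p3:
  fixes A :: "'a::banach set" and d d1 :: real
  assumes "uniformly_convex_space TYPE('a)"
    and "d > 0"
    and "closed A"
    and "weakly_convex_on A (2 * d)"
    and "\<forall>\<epsilon>. 0 < \<epsilon> \<and> \<epsilon> < 2 * d \<longrightarrow> d * modconv TYPE('a) (\<epsilon> / d) > modnonconv A \<epsilon>"
    and "condition_i (\<lambda>t. d * modconv TYPE('a) (t / d)) (modnonconv A) (2 * d)"
    and "0 < d1" and "d1 < d"
  shows "\<forall>x::'a. A \<inter> cball x d1 \<noteq> {} \<longrightarrow>
     weakly_convex_on (A \<inter> cball x d1) (diameter (A \<inter> cball x d1)) \<and>
     (\<forall>\<epsilon>. 0 \<le> \<epsilon> \<and> \<epsilon> < diameter (A \<inter> cball x d1) \<longrightarrow>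
        modnonconv (A \<inter> cball x d1) \<epsilon> \<le> modnonconv A \<epsilon>) \<and>
     path_connected (A \<inter> cball x d1)"
proof (intro allI impI conjI)
  fix x :: 'a
  have wc: "modnonconv A \<eta> < \<eta> / 2" and dom: "gamma0 A \<eta> < d * modconv TYPE('a) (\<eta> / d)"
    if "0 < \<eta>" "\<eta> \<le> 2 * d1" for \<eta>
  proof -
    have "\<eta> < 2 * d"
      using that(2) assms(8) by linarith
    then show "modnonconv A \<eta> < \<eta> / 2" "gamma0 A \<eta> < d * modconv TYPE('a) (\<eta> / d)"
      using assms(4,5) that(1) gamma0_le_modnonconv[OF that(1), of A]
      unfolding weakly_convex_on_def by force+
  qed
  have le: "modnonconv (A \<inter> cball x d1) \<epsilon> \<le> modnonconv A \<epsilon>" if "0 \<le> \<epsilon>" for \<epsilon>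
    using assms(2) less_imp_le[OF assms(8)] that dom by (rule modnonconv_Int_cball_le)
  have "diameter (A \<inter> cball x d1) \<le> 2 * d"
    using diameter_Int_cball_le[of d1 A x] assms(7,8) by simp
  then show "weakly_convex_on (A \<inter> cball x d1) (diameter (A \<inter> cball x d1))"
    by (rule weakly_convex_on_if_modnonconv_le[OF assms(4)]) (simp add: le)
  show "modnonconv (A \<inter> cball x d1) \<epsilon> \<le> modnonconv A \<epsilon>"
    if "0 \<le> \<epsilon> \<and> \<epsilon> < diameter (A \<inter> cball x d1)" for \<epsilon>
    using that le by blast
  show "path_connected (A \<inter> cball x d1)"
    using assms(3,2) less_imp_le[OF assms(8)] wc dom by (rule path_connected_Int_cball)
qed

end
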